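(* In the homogeneous, resource-abundant setting ($N_k=N>0$ for all $k\in[n]$, $F\ge nN$), let $\boldsymbol O^*\in\mathbb R^{\mathcal N}$ have $O^*_{\mathcal N}=N/2$ and $O^*_i=0$ for $i<\mathcal N$. Let $\boldsymbol\varepsilon\in\mathbb R^{\mathcal N}$ satisfy $\varepsilon_i\ge0$ for all $i\in[\mathcal N]$ and $\boldsymbol O^*+\boldsymbol\varepsilon\in\Omega$. Then $$T(\boldsymbol\varepsilon)\le-\boldsymbol O^{*t}M\boldsymbol\varepsilon,$$ where $T(\boldsymbol\varepsilon)=\boldsymbol l^t\boldsymbol\varepsilon+\frac12\boldsymbol\varepsilon^tM\boldsymbol\varepsilon$.
   Context: Fix an integer $n\ge2$ and write $[m]=\{1,\dots,m\}$. Let $\mathcal X$ be the collection of subsets of $[n]$ with at least two elements, $\mathcal N=2^n-n-1$, and let $I:\mathcal X\to[\mathcal N]$ be a bijection such that $A\subsetneq B$ implies $I(A)<I(B)$ (so $I([n])=\mathcal N$). Write $f(c)=|I^{-1}(c)|$, $S(c)=\{i\in[\mathcal N]:I^{-1}(c)\subseteq I^{-1}(i)\}$, $B(c)=\{i\in[\mathcal N]:I^{-1}(i)\subsetneq I^{-1}(c)\}$, and for $k\in[n]$, $\tilde S(k)=\{i\in[\mathcal N]:k\in I^{-1}(i)\}$. With effective knowledges $N_k'=\min\{N_k,F\}$ (here all equal to $N$), the objective is $$T(\boldsymbol O)=\sum_{c=1}^{\mathcal N}\frac{\sum_{a\in S(c)}O_a}{\prod_{k\in I^{-1}(c)}N_k'}\Big(\sum_{k\in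 I^{-1}(c)}N_k'-f(c)\sum_{a\in S(c)}O_a-(f(c)-1)\sum_{a\in B(c)}O_a\Big),$$ and $\boldsymbol l$, $M$ (symmetric) are the unique vector and matrix with $T(\boldsymbol O)=\boldsymbol l^t\boldsymbol O+\frac12\boldsymbol O^tM\boldsymbol O$ on $\mathbb R^{\mathcal N}$. In the homogeneous resource-abundant setting the feasible region is $\Omega=\{\boldsymbol O\in\mathbb R^{\mathcal N}:\boldsymbol O\ge\boldsymbol 0,\ \sum_{i\in\tilde S(k)}O_i\le N\ \forall k\in[n]\}$ (the resource constraint $\sum_k N_k'-\sum_c(f(c)-1)O_c\le F$ holds automatically). *)

theory Defs
  imports Complex_Main
begin

text \<open>Vectors in R^cal_N are represented as functions nat => real; only the
  entries with index in {1..cal_N} matter. Matrices are nat => nat => real.\<close>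

definition calN :: "nat \<Rightarrow> nat" where
  "calN n = 2 ^ n - n - 1"

definition calX :: "nat \<Rightarrow> nat set set" where
  "calX n = {A. A \<subseteq> {1..n} \<and> 2 \<le> card A}"

definition valid_index :: "nat \<Rightarrow> (nat set \<Rightarrow> nat) \<Rightarrow> bool" where
  "valid_index n I \<longleftrightarrow> bij_betw I (calX n) {1..calN n} \<and>
     (\<forall>A\<in>calX n. \<forall>B\<in>calX n. A \<subset> B \<longrightarrow> I A < I B)"

definition Iinv :: "nat \<Rightarrow> (nat set \<Rightarrow> nat) \<Rightarrow> nat \<Rightarrow> nat set" where
  "Iinv n I c = the_inv_into (calX n) I c"

definition fsz :: "nat \<Rightarrow> (nat set \<Rightarrow> nat) \<Rightarrow> nat \<Rightarrow> nat" where
  "fsz n I c = card (Iinv n I c)"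

definition Sset :: "nat \<Rightarrow> (nat set \<Rightarrow> nat) \<Rightarrow> nat \<Rightarrow> nat set" where
  "Sset n I c = {i \<in> {1..calN n}. Iinv n I c \<subseteq> Iinv n I i}"

definition Bset :: "nat \<Rightarrow> (nat set \<Rightarrow> nat) \<Rightarrow> nat \<Rightarrow> nat set" where
  "Bset n I c = {i \<in> {1..calN n}. Iinv n I i \<subset> Iinv n I c}"

definition Stilde :: "nat \<Rightarrow> (nat set \<Rightarrow> nat) \<Rightarrow> nat \<Rightarrow> nat set" where
  "Stilde n I k = {i \<in> {1..calN n}. k \<in> Iinv n I i}"

text \<open>Objective T with all effective knowledges equal to Np (= N' = min N F).\<close>
definition Tobj :: "nat \<Rightarrow> (nat set \<Rightarrow> nat) \<Rightarrow> real \<Rightarrow> (nat \<Rightarrow> real) \<Rightarrow> real" where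
  "Tobj n I Np x = (\<Sum>c = 1..calN n.
     (\<Sum>a\<in>Sset n I c. x a) / (\<Prod>k\<in>Iinv n I c. Np) *
     ((\<Sum>k\<in>Iinv n I c. Np) - real (fsz n I c) * (\<Sum>a\<in>Sset n I c. x a)
       - (real (fsz n I c) - 1) * (\<Sum>a\<in>Bset n I c. x a)))"

definition Omega :: "nat \<Rightarrow> (nat set \<Rightarrow> nat) \<Rightarrow> real \<Rightarrow> (nat \<Rightarrow> real) set" where
  "Omega n I N = {x. (\<forall>i\<in>{1..calN n}. 0 \<le> x i) \<and>
                     (\<forall>k\<in>{1..n}. (\<Sum>i\<in>Stilde n I k. x i) \<le> N)}"

definition Ostar :: "nat \<Rightarrow> real \<Rightarrow> nat \<Rightarrow> real" where
  "Ostar n N i = (if i = calN n then N / 2 else 0)"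

definition lin :: "nat \<Rightarrow> (nat \<Rightarrow> real) \<Rightarrow> (nat \<Rightarrow> real) \<Rightarrow> real" where
  "lin n l x = (\<Sum>i = 1..calN n. l i * x i)"

definition bilin :: "nat \<Rightarrow> (nat \<Rightarrow> real) \<Rightarrow> (nat \<Rightarrow> nat \<Rightarrow> real) \<Rightarrow> (nat \<Rightarrow> real) \<Rightarrow> real" where
  "bilin n x M y = (\<Sum>i = 1..calN n. \<Sum>j = 1..calN n. x i * M i j * y j)"

end

theory Submission
  imports Defs
begin

text \<open>Every summand of \<open>T\<close> has the form \<open>s (f N - f s - (f - 1) b) / N\<^sup>f\<close> with
  \<open>s, b \<ge> 0\<close>; as a function of \<open>s\<close> alone it is a concave parabola maximised at \<open>s = N/2\<close>, and
  the \<open>b\<close>-term only lowers it. At \<open>O\<^sup>*\<close> every \<open>s\<close> equals \<open>N/2\<close> (the full set \<open>[n]\<close>, which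
  carries the last index, contains every \<open>I\<^sup>-\<^sup>1(c)\<close>) and every \<open>b\<close> vanishes, so \<open>T(O\<^sup>* + \<epsilon>) \<le> T(O\<^sup>*)\<close>
  for every \<open>\<epsilon> \<ge> 0\<close>. Expanding the quadratic form
  \<open>T(O\<^sup>* + \<epsilon>) = T(O\<^sup>*) + T(\<epsilon>) + O\<^sup>*\<^sup>t M \<epsilon>\<close> gives the claim.\<close>

lemma summand_le_at_half:
  fixes P f N s b A :: real
  assumes "0 < P" "1 \<le> f" "0 \<le> s" "0 \<le> b" "A = f * N"
  shows "s / P * (A - f * s - (f - 1) * b) \<le> (N / 2) / P * (A - f * (N / 2) - (f - 1) * 0)"
proof -
  have "s * ((f - 1) * b) \<ge> 0" using assms by simp
  moreover have "f * (N / 2 - s)\<^sup>2 \<ge> 0" using assms by simp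
  ultimately have "s * (A - f * s - (f - 1) * b) \<le> (N / 2) * (A - f * (N / 2) - (f - 1) * 0)"
    unfolding \<open>A = f * N\<close> by (simp add: power2_eq_square algebra_simps)
  then have "s * (A - f * s - (f - 1) * b) / P \<le> (N / 2) * (A - f * (N / 2) - (f - 1) * 0) / P"
    using \<open>0 < P\<close> by (intro divide_right_mono) auto
  then show ?thesis by simp
qed

lemma lin_add: "lin n l (\<lambda>i. x i + y i) = lin n l x + lin n l y"
  unfolding lin_def by (simp add: distrib_left sum.distrib)

lemma bilin_add: "bilin n (\<lambda>i. x i + y i) M (\<lambda>i. x i + y i)
   = bilin n x M x + bilin n x M y + bilin n y M x + bilin n y M y"
  unfolding bilin_def by (simp add: distrib_left distrib_right sum.distrib)

lemma bilin_commute: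
  assumes "\<forall>i\<in>{1..calN n}. \<forall>j\<in>{1..calN n}. M i j = M j i"
  shows "bilin n x M y = bilin n y M x"
proof -
  have "bilin n x M y = (\<Sum>j = 1..calN n. \<Sum>i = 1..calN n. x i * M i j * y j)"
    unfolding bilin_def by (rule sum.swap)
  also have "\<dots> = bilin n y M x"
    unfolding bilin_def using assms
    by (intro sum.cong refl) (auto simp: mult.commute mult.left_commute)
  finally show ?thesis .
qed

lemma quadratic_form_add:
  assumes "\<forall>i\<in>{1..calN n}. \<forall>j\<in>{1..calN n}. M i j = M j i"
    and "\<And>x. q x = lin n l x + 1/2 * bilin n x M x"
  shows "q (\<lambda>i. x i + y i) = q x + q y + bilin n x M y"
  unfolding assms(2) lin_add bilin_add bilin_commute[OF assms(1), of y x]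
  by (simp add: algebra_simps)

lemma Iinv_mem_calX:
  assumes "valid_index n I" "c \<in> {1..calN n}"
  shows "Iinv n I c \<in> calX n"
proof -
  have "bij_betw I (calX n) {1..calN n}" using assms(1) unfolding valid_index_def by blast
  from bij_betwE[OF bij_betw_the_inv_into[OF this]] show ?thesis
    unfolding Iinv_def using assms(2) by blast
qed

lemma Iinv_subset:
  assumes "valid_index n I" "c \<in> {1..calN n}"
  shows "Iinv n I c \<subseteq> {1..n}"
  using Iinv_mem_calX[OF assms] unfolding calX_def by blast

lemma fsz_ge_2:
  assumes "valid_index n I" "c \<in> {1..calN n}"
  shows "2 \<le> fsz n I c"
  using Iinv_mem_calX[OF assms] unfolding calX_def fsz_def by blast

lemma full_set_mem_calX: "2 \<le> n \<Longrightarrow> {1..n} \<in> calX n"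
  unfolding calX_def by simp

lemma valid_index_full_set:
  assumes I: "valid_index n I" and n: "2 \<le> n"
  shows "I {1..n} = calN n"
proof -
  have bij: "bij_betw I (calX n) {1..calN n}"
    and mono: "\<forall>A\<in>calX n. \<forall>B\<in>calX n. A \<subset> B \<longrightarrow> I A < I B"
    using I unfolding valid_index_def by auto
  have full: "{1..n} \<in> calX n" using full_set_mem_calX[OF n] .
  then have I_full: "I {1..n} \<in> {1..calN n}" using bij_betwE[OF bij] by blast
  then have "calN n \<in> {1..calN n}" by simp
  then obtain A where A: "A \<in> calX n" "I A = calN n"
    using bij_betw_imp_surj_on[OF bij] by (metis imageE)
  have "A = {1..n}"
  proof (rule ccontr)
    assume "A \<noteq> {1..n}"
    moreover have "A \<subseteq> {1..n}" using A(1) unfolding calX_def by simp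
    ultimately have "I A < I {1..n}" using mono A(1) full by blast
    then show False using A(2) I_full by simp
  qed
  then show ?thesis using A(2) by simp
qed

lemma calN_mem_indices:
  assumes "valid_index n I" "2 \<le> n"
  shows "calN n \<in> {1..calN n}"
proof -
  have "bij_betw I (calX n) {1..calN n}" using assms(1) unfolding valid_index_def by blast
  then have "I {1..n} \<in> {1..calN n}"
    using bij_betwE full_set_mem_calX[OF assms(2)] by blast
  then show ?thesis using valid_index_full_set[OF assms] by simp
qed

lemma Iinv_calN:
  assumes "valid_index n I" "2 \<le> n"
  shows "Iinv n I (calN n) = {1..n}"
proof -
  have "inj_on I (calX n)"
    using assms(1) bij_betw_imp_inj_on unfolding valid_index_def by blast
  from the_inv_into_f_f[OF this full_set_mem_calX[OF assms(2)]] show ?thesis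
    unfolding Iinv_def valid_index_full_set[OF assms] .
qed

lemma calN_mem_Sset:
  assumes "valid_index n I" "2 \<le> n" "c \<in> {1..calN n}"
  shows "calN n \<in> Sset n I c"
  using Iinv_subset[OF assms(1,3)] calN_mem_indices[OF assms(1,2)] Iinv_calN[OF assms(1,2)]
  unfolding Sset_def by simp

lemma calN_not_mem_Bset:
  assumes "valid_index n I" "2 \<le> n" "c \<in> {1..calN n}"
  shows "calN n \<notin> Bset n I c"
  using Iinv_subset[OF assms(1,3)] Iinv_calN[OF assms(1,2)]
  unfolding Bset_def by auto

lemma sum_Ostar_Sset:
  assumes "valid_index n I" "2 \<le> n" "c \<in> {1..calN n}"
  shows "(\<Sum>a\<in>Sset n I c. Ostar n N a) = N / 2"
proof -
  have "finite (Sset n I c)" unfolding Sset_def by simp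
  then show ?thesis
    using calN_mem_Sset[OF assms] unfolding Ostar_def by simp
qed

lemma sum_Ostar_Bset:
  assumes "valid_index n I" "2 \<le> n" "c \<in> {1..calN n}"
  shows "(\<Sum>a\<in>Bset n I c. Ostar n N a) = 0"
  using calN_not_mem_Bset[OF assms] unfolding Ostar_def by (simp add: sum.neutral)

lemma Tobj_le_Tobj_Ostar:
  assumes I: "valid_index n I" and n: "2 \<le> n" and N: "0 < N"
    and x: "\<forall>i\<in>{1..calN n}. 0 \<le> x i"
  shows "Tobj n I N x \<le> Tobj n I N (Ostar n N)"
  unfolding Tobj_def
proof (rule sum_mono)
  fix c assume c: "c \<in> {1..calN n}"
  let ?f = "real (fsz n I c)"
  have P: "0 < (\<Prod>k\<in>Iinv n I c. N)" using N by (simp add: prod_pos)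
  have f: "1 \<le> ?f" using fsz_ge_2[OF I c] by simp
  have s: "0 \<le> (\<Sum>a\<in>Sset n I c. x a)" and b: "0 \<le> (\<Sum>a\<in>Bset n I c. x a)"
    using x unfolding Sset_def Bset_def by (auto intro: sum_nonneg)
  have sum_N: "(\<Sum>k\<in>Iinv n I c. N) = ?f * N" unfolding fsz_def by simp
  show "(\<Sum>a\<in>Sset n I c. x a) / (\<Prod>k\<in>Iinv n I c. N) *
      ((\<Sum>k\<in>Iinv n I c. N) - ?f * (\<Sum>a\<in>Sset n I c. x a) - (?f - 1) * (\<Sum>a\<in>Bset n I c. x a))
    \<le> (\<Sum>a\<in>Sset n I c. Ostar n N a) / (\<Prod>k\<in>Iinv n I c. N) *
      ((\<Sum>k\<in>Iinv n I c. N) - ?f * (\<Sum>a\<in>Sset n I c. Ostar n N a)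
        - (?f - 1) * (\<Sum>a\<in>Bset n I c. Ostar n N a))"
    unfolding sum_Ostar_Sset[OF I n c] sum_Ostar_Bset[OF I n c]
    by (rule summand_le_at_half[OF P f s b sum_N])
qed

theorem mainTheorem3:
  fixes n :: nat and I :: "nat set \<Rightarrow> nat" and N F :: real
    and l :: "nat \<Rightarrow> real" and M :: "nat \<Rightarrow> nat \<Rightarrow> real" and eps :: "nat \<Rightarrow> real"
  assumes "2 \<le> n"
    and "valid_index n I"
    and "0 < N"
    and "real n * N \<le> F"
    and "\<forall>i\<in>{1..calN n}. \<forall>j\<in>{1..calN n}. M i j = M j i"
    and "\<forall>x. Tobj n I (min N F) x = lin n l x + 1/2 * bilin n x M x"
    and "\<forall>i\<in>{1..calN n}. 0 \<le> eps i"
    and "(\<lambda>i. Ostar n N i + eps i) \<in> Omega n I N"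
  shows "lin n l eps + 1/2 * bilin n eps M eps \<le> - bilin n (Ostar n N) M eps"
proof -
  have "N \<le> real n * N" using assms(1,3) by simp
  then have "min N F = N" using assms(4) by simp
  then have T: "\<And>x. Tobj n I N x = lin n l x + 1/2 * bilin n x M x" using assms(6) by metis
  have "\<forall>i\<in>{1..calN n}. 0 \<le> Ostar n N i + eps i"
    using assms(3,7) unfolding Ostar_def by simp
  then have "Tobj n I N (\<lambda>i. Ostar n N i + eps i) \<le> Tobj n I N (Ostar n N)"
    by (rule Tobj_le_Tobj_Ostar[OF assms(2,1,3)])
  then show ?thesis
    unfolding quadratic_form_add[OF assms(5) T] T by linarith
qed

end
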